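(* Let $(X,d)$ be a compact metric space and let $f_{1,\infty}=(f_n)_{n=1}^\infty$ be a sequence of continuous maps $f_n:X\to X$ which is either finitely generated or converges uniformly to a map $f:X\to X$. Then for every $k\in\mathbb{N}$, $(X,f_{1,\infty})$ is Kato chaotic if and only if its $k$-th iterate $(X,f_{1,\infty}^{[k]})$ is Kato chaotic.
   Context: For $i,n\in\mathbb{N}$ write $f_i^n=f_{i+n-1}\circ\cdots\circ f_i$, $f_i^0=\mathrm{id}_X$. The $k$-th iterate is $f_{1,\infty}^{[k]}=(f_{k(n-1)+1}^k)_{n=1}^\infty$, whose $n$-fold composition from index $1$ is $f_1^{kn}$. The system $f_{1,\infty}$ is finitely generated if there is a finite set $F$ of continuous self-maps of $X$ with $f_i\in F$ for all $i$. A non-autonomous system $g_{1,\infty}$ (compositions $g_1^n$) is sensitive if there is $\delta>0$ such that for every nonempty open $U\subseteq X$ there exist $x,y\in U$ and $n\in\mathbb{N}$ with $d(g_1^n(x),g_1^n(y))>\delta$; it is accessible if for every $\varepsilon>0$ and all nonempty open $U,V\subseteq X$ there exist $x\in U$, $y\in V$, $n\in\mathbb{N}$ with $d(g_1^n(x),g_1^n(y))<\varepsilon$; it is Kato chaotic if it is sensitive and accessible. *)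

theory Defs
  imports "HOL-Analysis.Analysis"
begin

text \<open>Non-autonomous systems are sequences of maps indexed from 1; the value at index 0 is ignored.
  comp_from f i n is f_i^n = f_(i+n-1) o ... o f_i, with f_i^0 = id.\<close>
fun comp_from :: "(nat \<Rightarrow> 'a \<Rightarrow> 'a) \<Rightarrow> nat \<Rightarrow> nat \<Rightarrow> 'a \<Rightarrow> 'a" where
  "comp_from f i 0 = id"
| "comp_from f i (Suc n) = f (i + n) \<circ> comp_from f i n"

definition kth_iterate :: "(nat \<Rightarrow> 'a \<Rightarrow> 'a) \<Rightarrow> nat \<Rightarrow> nat \<Rightarrow> 'a \<Rightarrow> 'a" where
  "kth_iterate f k = (\<lambda>n. comp_from f (k * (n - 1) + 1) k)"

definition finitely_generated :: "(nat \<Rightarrow> 'a::topological_space \<Rightarrow> 'a) \<Rightarrow> bool" where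
  "finitely_generated f \<longleftrightarrow> (\<exists>F. finite F \<and> (\<forall>h\<in>F. continuous_on UNIV h) \<and> (\<forall>i\<ge>1. f i \<in> F))"

definition na_sensitive :: "(nat \<Rightarrow> 'a::metric_space \<Rightarrow> 'a) \<Rightarrow> bool" where
  "na_sensitive g \<longleftrightarrow> (\<exists>\<delta>>0. \<forall>U. open U \<and> U \<noteq> {} \<longrightarrow>
      (\<exists>x\<in>U. \<exists>y\<in>U. \<exists>n\<ge>1. dist (comp_from g 1 n x) (comp_from g 1 n y) > \<delta>))"

definition na_accessible :: "(nat \<Rightarrow> 'a::metric_space \<Rightarrow> 'a) \<Rightarrow> bool" where
  "na_accessible g \<longleftrightarrow> (\<forall>\<epsilon>>0. \<forall>U V. open U \<and> U \<noteq> {} \<and> open V \<and> V \<noteq> {} \<longrightarrow>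
      (\<exists>x\<in>U. \<exists>y\<in>V. \<exists>n\<ge>1. dist (comp_from g 1 n x) (comp_from g 1 n y) < \<epsilon>))"

definition kato_chaotic :: "(nat \<Rightarrow> 'a::metric_space \<Rightarrow> 'a) \<Rightarrow> bool" where
  "kato_chaotic g \<longleftrightarrow> na_sensitive g \<and> na_accessible g"

end

theory Submission
  imports Defs
begin

text \<open>Under either hypothesis the maps f_j (j >= 1) are uniformly equicontinuous: a finite set
  of continuous maps of a compact space is, and so is a uniformly convergent sequence, whose tail
  stays uniformly close to its uniformly continuous limit. Hence so are the blocks f_j^r with
  r <= k. The k-th iterate compares orbits of f only at the times k m, so its sensitivity and
  accessibility give those of f at once. Conversely, write a time n as k m + r with 0 <= r <= k:
  by equicontinuity of the blocks f_(km+1)^r, two orbits far apart at time n = k m + r are already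
  a fixed distance apart at time k m, and two orbits close enough at time n are still close at
  the next multiple of k, which is at most k steps later.\<close>

lemma comp_from_add: "comp_from f i (m + n) = comp_from f (i + m) n \<circ> comp_from f i m"
  by (induction n) (auto simp: add.assoc)

lemma comp_from_kth_iterate: "comp_from (kth_iterate f k) 1 n = comp_from f 1 (k * n)"
proof (induction n)
  case 0
  then show ?case by simp
next
  case (Suc n)
  have "comp_from (kth_iterate f k) 1 (Suc n) = comp_from f (1 + k * n) k \<circ> comp_from f 1 (k * n)"
    using Suc by (simp add: kth_iterate_def add.commute)
  also have "\<dots> = comp_from f 1 (k * n + k)"
    by (rule comp_from_add[symmetric])
  also have "\<dots> = comp_from f 1 (k * Suc n)"
    by (simp add: add.commute)
  finally show ?case .
qed

subsection \<open>Uniformly equicontinuous families\<close>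

definition uniformly_equicontinuous :: "'i set \<Rightarrow> ('i \<Rightarrow> 'a::metric_space \<Rightarrow> 'b::metric_space) \<Rightarrow> bool" where
  "uniformly_equicontinuous I f \<longleftrightarrow>
     (\<forall>e>0. \<exists>d>0. \<forall>i\<in>I. \<forall>x y. dist x y < d \<longrightarrow> dist (f i x) (f i y) < e)"

lemma uniformly_equicontinuousD:
  assumes "uniformly_equicontinuous I f" "e > 0"
  obtains d where "d > 0" "\<And>i x y. i \<in> I \<Longrightarrow> dist x y < d \<Longrightarrow> dist (f i x) (f i y) < e"
  using assms unfolding uniformly_equicontinuous_def by meson

lemma uniformly_equicontinuous_singleton:
  "uniformly_equicontinuous {i} f \<longleftrightarrow> uniformly_continuous_on UNIV (f i)"
  unfolding uniformly_equicontinuous_def uniformly_continuous_on_def by simp (metis dist_commute)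

lemma uniformly_equicontinuous_subset:
  assumes "uniformly_equicontinuous I f" "J \<subseteq> I"
  shows "uniformly_equicontinuous J f"
  unfolding uniformly_equicontinuous_def
proof (intro allI impI)
  fix e :: real
  assume "e > 0"
  obtain d where "d > 0" and d: "\<And>i x y. i \<in> I \<Longrightarrow> dist x y < d \<Longrightarrow> dist (f i x) (f i y) < e"
    by (rule uniformly_equicontinuousD[OF assms(1) \<open>e > 0\<close>]) blast
  show "\<exists>d>0. \<forall>i\<in>J. \<forall>x y. dist x y < d \<longrightarrow> dist (f i x) (f i y) < e"
    using \<open>d > 0\<close> d assms(2) by (intro exI[of _ d]) auto
qed

lemma uniformly_equicontinuous_reindex:
  "uniformly_equicontinuous (h ` I) f \<longleftrightarrow> uniformly_equicontinuous I (f \<circ> h)"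
  unfolding uniformly_equicontinuous_def by simp

lemma uniformly_equicontinuous_Un:
  assumes "uniformly_equicontinuous I f" "uniformly_equicontinuous J f"
  shows "uniformly_equicontinuous (I \<union> J) f"
  unfolding uniformly_equicontinuous_def
proof (intro allI impI)
  fix e :: real
  assume "e > 0"
  obtain d1 where "d1 > 0" "\<And>i x y. i \<in> I \<Longrightarrow> dist x y < d1 \<Longrightarrow> dist (f i x) (f i y) < e"
    by (rule uniformly_equicontinuousD[OF assms(1) \<open>e > 0\<close>]) blast
  moreover obtain d2 where "d2 > 0" "\<And>i x y. i \<in> J \<Longrightarrow> dist x y < d2 \<Longrightarrow> dist (f i x) (f i y) < e"
    by (rule uniformly_equicontinuousD[OF assms(2) \<open>e > 0\<close>]) blast
  ultimately show "\<exists>d>0. \<forall>i\<in>I \<union> J. \<forall>x y. dist x y < d \<longrightarrow> dist (f i x) (f i y) < e"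
    by (intro exI[of _ "min d1 d2"]) auto
qed

lemma uniformly_equicontinuous_UN:
  assumes "finite R" "\<And>r. r \<in> R \<Longrightarrow> uniformly_equicontinuous (I r) f"
  shows "uniformly_equicontinuous (\<Union>r\<in>R. I r) f"
  using assms
proof (induction R rule: finite_induct)
  case empty
  show ?case by (auto simp: uniformly_equicontinuous_def intro: exI[of _ 1])
next
  case (insert r R)
  then show ?case by (simp add: uniformly_equicontinuous_Un)
qed

lemma uniformly_equicontinuous_finite:
  assumes "finite I" "\<And>i. i \<in> I \<Longrightarrow> uniformly_continuous_on UNIV (f i)"
  shows "uniformly_equicontinuous I f"
proof -
  have "uniformly_equicontinuous (\<Union>i\<in>I. {i}) f"
    using assms by (intro uniformly_equicontinuous_UN) (auto simp: uniformly_equicontinuous_singleton)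
  then show ?thesis
    by simp
qed

lemma uniformly_equicontinuous_comp:
  fixes f :: "'j \<Rightarrow> 'b::metric_space \<Rightarrow> 'c::metric_space" and g :: "'i \<Rightarrow> 'a::metric_space \<Rightarrow> 'b"
  assumes "uniformly_equicontinuous J f" "uniformly_equicontinuous I g" "\<And>i. i \<in> I \<Longrightarrow> \<sigma> i \<in> J"
  shows "uniformly_equicontinuous I (\<lambda>i. f (\<sigma> i) \<circ> g i)"
  unfolding uniformly_equicontinuous_def
proof (intro allI impI)
  fix e :: real
  assume "e > 0"
  obtain d1 where "d1 > 0" and d1: "\<And>j x y. j \<in> J \<Longrightarrow> dist x y < d1 \<Longrightarrow> dist (f j x) (f j y) < e"
    by (rule uniformly_equicontinuousD[OF assms(1) \<open>e > 0\<close>]) blast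
  obtain d2 where "d2 > 0" and d2: "\<And>i x y. i \<in> I \<Longrightarrow> dist x y < d2 \<Longrightarrow> dist (g i x) (g i y) < d1"
    by (rule uniformly_equicontinuousD[OF assms(2) \<open>d1 > 0\<close>]) blast
  show "\<exists>d>0. \<forall>i\<in>I. \<forall>x y. dist x y < d \<longrightarrow> dist ((f (\<sigma> i) \<circ> g i) x) ((f (\<sigma> i) \<circ> g i) y) < e"
  proof (intro exI[of _ d2] conjI ballI allI impI)
    fix i and x y :: 'a
    assume "i \<in> I" "dist x y < d2"
    then have "dist (g i x) (g i y) < d1"
      by (rule d2)
    with assms(3)[OF \<open>i \<in> I\<close>] show "dist ((f (\<sigma> i) \<circ> g i) x) ((f (\<sigma> i) \<circ> g i) y) < e"
      unfolding comp_apply by (rule d1)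
  qed (rule \<open>d2 > 0\<close>)
qed

lemma uniformly_equicontinuous_tail_of_uniform_limit:
  fixes f :: "nat \<Rightarrow> 'a::metric_space \<Rightarrow> 'b::metric_space"
  assumes lim: "uniform_limit UNIV f g sequentially" and g: "uniformly_continuous_on UNIV g"
    and "e > 0"
  obtains N d where "d > 0" "\<And>n x y. n \<ge> N \<Longrightarrow> dist x y < d \<Longrightarrow> dist (f n x) (f n y) < e"
proof -
  have "e / 3 > 0"
    using \<open>e > 0\<close> by simp
  then obtain N where N: "\<And>n x. n \<ge> N \<Longrightarrow> dist (f n x) (g x) < e / 3"
    using uniform_limitD[OF lim] unfolding eventually_sequentially by blast
  obtain d where "d > 0" and d: "\<And>x y. dist y x < d \<Longrightarrow> dist (g y) (g x) < e / 3"
    by (rule uniformly_continuous_onE[OF g \<open>e / 3 > 0\<close>]) blast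
  have "dist (f n x) (f n y) < e" if "n \<ge> N" "dist x y < d" for n and x y :: 'a
  proof -
    have "dist (f n x) (f n y) \<le> dist (f n x) (g x) + dist (g x) (g y) + dist (f n y) (g y)"
      using dist_triangle[of "f n x" "f n y" "g x"] dist_triangle[of "g x" "f n y" "g y"]
      by (simp add: dist_commute)
    also have "\<dots> < e / 3 + e / 3 + e / 3"
      using N[of n x] N[of n y] d[of x y] that by (intro add_strict_mono) auto
    finally show ?thesis
      by simp
  qed
  with \<open>d > 0\<close> show thesis
    by (rule that)
qed

lemma uniformly_equicontinuous_uniform_limit:
  fixes f :: "nat \<Rightarrow> 'a::metric_space \<Rightarrow> 'b::metric_space"
  assumes lim: "uniform_limit UNIV f g sequentially" and g: "uniformly_continuous_on UNIV g"
    and f: "\<And>n. n \<in> I \<Longrightarrow> uniformly_continuous_on UNIV (f n)"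
  shows "uniformly_equicontinuous I f"
  unfolding uniformly_equicontinuous_def
proof (intro allI impI)
  fix e :: real
  assume "e > 0"
  obtain N d1 where "d1 > 0" and tail: "\<And>n x y. n \<ge> N \<Longrightarrow> dist x y < d1 \<Longrightarrow> dist (f n x) (f n y) < e"
    by (rule uniformly_equicontinuous_tail_of_uniform_limit[OF lim g \<open>e > 0\<close>]) blast
  have head_equicont: "uniformly_equicontinuous (I \<inter> {..<N}) f"
    using f by (intro uniformly_equicontinuous_finite) auto
  obtain d2 where "d2 > 0" and head: "\<And>n x y. n \<in> I \<inter> {..<N} \<Longrightarrow> dist x y < d2 \<Longrightarrow> dist (f n x) (f n y) < e"
    by (rule uniformly_equicontinuousD[OF head_equicont \<open>e > 0\<close>]) blast
  show "\<exists>d>0. \<forall>n\<in>I. \<forall>x y. dist x y < d \<longrightarrow> dist (f n x) (f n y) < e"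
  proof (intro exI[of _ "min d1 d2"] conjI ballI allI impI)
    fix n and x y :: 'a
    assume "n \<in> I" "dist x y < min d1 d2"
    then show "dist (f n x) (f n y) < e"
      using head[of n x y] tail[of n x y] by (cases "n < N") auto
  qed (use \<open>d1 > 0\<close> \<open>d2 > 0\<close> in simp)
qed

lemma uniformly_equicontinuous_comp_from:
  assumes "uniformly_equicontinuous {1..} f"
  shows "uniformly_equicontinuous {1..} (\<lambda>j. comp_from f j r)"
proof (induction r)
  case 0
  show ?case
    by (auto simp: uniformly_equicontinuous_def)
next
  case (Suc r)
  have "uniformly_equicontinuous {1..} (\<lambda>j. f (j + r) \<circ> comp_from f j r)"
    using assms Suc by (rule uniformly_equicontinuous_comp) simp
  then show ?case
    by (simp only: comp_from.simps)
qed

lemma uniformly_equicontinuous_comp_from_blocks: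
  assumes "uniformly_equicontinuous {1..} f"
  shows "uniformly_equicontinuous ({1..} \<times> {..k}) (\<lambda>(j, r). comp_from f j r)"
proof -
  have cover: "{1..} \<times> {..k} = (\<Union>r\<le>k. (\<lambda>j. (j, r)) ` {1..})"
    by auto
  show ?thesis
    unfolding cover
  proof (rule uniformly_equicontinuous_UN)
    fix r
    show "uniformly_equicontinuous ((\<lambda>j. (j, r)) ` {1..}) (\<lambda>(j, r). comp_from f j r)"
      unfolding uniformly_equicontinuous_reindex
      using uniformly_equicontinuous_comp_from[OF assms, of r] by (simp add: comp_def)
  qed simp
qed

lemma uniformly_equicontinuous_finitely_generated:
  fixes f :: "nat \<Rightarrow> 'a::metric_space \<Rightarrow> 'a"
  assumes "compact (UNIV :: 'a set)" "finitely_generated f"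
  shows "uniformly_equicontinuous {1..} f"
proof -
  obtain F where "finite F" and F_cont: "\<forall>h\<in>F. continuous_on UNIV h" and f_in_F: "\<forall>i\<ge>1. f i \<in> F"
    using assms(2) unfolding finitely_generated_def by blast
  have "uniformly_equicontinuous F (\<lambda>h. h)"
    using \<open>finite F\<close> F_cont compact_uniformly_continuous[OF _ assms(1)]
    by (intro uniformly_equicontinuous_finite) auto
  then have "uniformly_equicontinuous (f ` {1..}) (\<lambda>h. h)"
    by (rule uniformly_equicontinuous_subset) (use f_in_F in auto)
  then show ?thesis
    by (simp add: uniformly_equicontinuous_reindex comp_def)
qed

lemma uniformly_equicontinuous_of_compact:
  fixes f :: "nat \<Rightarrow> 'a::metric_space \<Rightarrow> 'a"
  assumes compact: "compact (UNIV :: 'a set)"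
    and cont: "\<And>n. n \<ge> 1 \<Longrightarrow> continuous_on UNIV (f n)"
    and "finitely_generated f \<or> (\<exists>g. uniform_limit UNIV f g sequentially)"
  shows "uniformly_equicontinuous {1..} f"
  using assms(3)
proof
  assume "finitely_generated f"
  with compact show ?thesis
    by (rule uniformly_equicontinuous_finitely_generated)
next
  assume "\<exists>g. uniform_limit UNIV f g sequentially"
  then obtain g where lim: "uniform_limit UNIV f g sequentially"
    by blast
  have "continuous_on UNIV g"
    by (rule uniform_limit_theorem[OF _ lim]) (use cont in \<open>auto simp: eventually_sequentially\<close>)
  then show ?thesis
    using compact cont
    by (intro uniformly_equicontinuous_uniform_limit[OF lim]) (auto intro: compact_uniformly_continuous)
qed

subsection \<open>Kato chaos of the iterates\<close>

lemma na_sensitiveI: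
  fixes g :: "nat \<Rightarrow> 'a::metric_space \<Rightarrow> 'a"
  assumes "\<delta> > 0"
    and "\<And>U. open U \<Longrightarrow> U \<noteq> {} \<Longrightarrow>
      \<exists>x\<in>U. \<exists>y\<in>U. \<exists>n\<ge>1. dist (comp_from g 1 n x) (comp_from g 1 n y) > \<delta>"
  shows "na_sensitive g"
  unfolding na_sensitive_def
proof (intro exI[of _ \<delta>] conjI allI impI)
  fix U :: "'a set"
  assume "open U \<and> U \<noteq> {}"
  then show "\<exists>x\<in>U. \<exists>y\<in>U. \<exists>n\<ge>1. dist (comp_from g 1 n x) (comp_from g 1 n y) > \<delta>"
    by (elim conjE) (rule assms(2))
qed (rule assms(1))

lemma na_sensitiveE:
  assumes "na_sensitive g"
  obtains \<delta> where "\<delta> > 0"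
    and "\<And>U. open U \<Longrightarrow> U \<noteq> {} \<Longrightarrow>
      \<exists>x\<in>U. \<exists>y\<in>U. \<exists>n\<ge>1. dist (comp_from g 1 n x) (comp_from g 1 n y) > \<delta>"
  using assms unfolding na_sensitive_def by auto

lemma na_accessibleI:
  assumes "\<And>e U V. e > 0 \<Longrightarrow> open U \<Longrightarrow> U \<noteq> {} \<Longrightarrow> open V \<Longrightarrow> V \<noteq> {} \<Longrightarrow>
      \<exists>x\<in>U. \<exists>y\<in>V. \<exists>n\<ge>1. dist (comp_from g 1 n x) (comp_from g 1 n y) < e"
  shows "na_accessible g"
  unfolding na_accessible_def using assms by auto

lemma na_accessibleD:
  assumes "na_accessible g" "e > 0" "open U" "U \<noteq> {}" "open V" "V \<noteq> {}"
  shows "\<exists>x\<in>U. \<exists>y\<in>V. \<exists>n\<ge>1. dist (comp_from g 1 n x) (comp_from g 1 n y) < e"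
  using assms unfolding na_accessible_def by simp

lemma ex_pair_at_multiple_time:
  assumes "k \<ge> 1" "\<exists>x\<in>U. \<exists>y\<in>V. \<exists>n\<ge>1. P (comp_from f 1 (k * n) x) (comp_from f 1 (k * n) y)"
  shows "\<exists>x\<in>U. \<exists>y\<in>V. \<exists>m\<ge>1. P (comp_from f 1 m x) (comp_from f 1 m y)"
proof -
  obtain x y n where "x \<in> U" "y \<in> V" "n \<ge> 1" "P (comp_from f 1 (k * n) x) (comp_from f 1 (k * n) y)"
    using assms(2) by auto
  moreover have "k * n \<ge> 1"
    using \<open>n \<ge> 1\<close> assms(1) by simp
  ultimately show ?thesis
    by (intro bexI[of _ x] bexI[of _ y] exI[of _ "k * n"]) auto
qed

lemma na_sensitive_of_kth_iterate:
  fixes f :: "nat \<Rightarrow> 'a::metric_space \<Rightarrow> 'a"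
  assumes "k \<ge> 1" "na_sensitive (kth_iterate f k)"
  shows "na_sensitive f"
  using assms(2)
proof (rule na_sensitiveE)
  fix \<delta> :: real
  assume "\<delta> > 0" and sens: "\<And>U. open U \<Longrightarrow> U \<noteq> {} \<Longrightarrow> \<exists>x\<in>U. \<exists>y\<in>U. \<exists>n\<ge>1.
      dist (comp_from (kth_iterate f k) 1 n x) (comp_from (kth_iterate f k) 1 n y) > \<delta>"
  show ?thesis
  proof (rule na_sensitiveI[OF \<open>\<delta> > 0\<close>])
    fix U :: "'a set"
    assume "open U" "U \<noteq> {}"
    from sens[OF this] show "\<exists>x\<in>U. \<exists>y\<in>U. \<exists>n\<ge>1. dist (comp_from f 1 n x) (comp_from f 1 n y) > \<delta>"
      unfolding comp_from_kth_iterate by (rule ex_pair_at_multiple_time[OF assms(1)])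
  qed
qed

lemma na_accessible_of_kth_iterate:
  fixes f :: "nat \<Rightarrow> 'a::metric_space \<Rightarrow> 'a"
  assumes "k \<ge> 1" "na_accessible (kth_iterate f k)"
  shows "na_accessible f"
proof (rule na_accessibleI)
  fix e :: real and U V :: "'a set"
  assume "e > 0" "open U" "U \<noteq> {}" "open V" "V \<noteq> {}"
  from na_accessibleD[OF assms(2) this]
  show "\<exists>x\<in>U. \<exists>y\<in>V. \<exists>n\<ge>1. dist (comp_from f 1 n x) (comp_from f 1 n y) < e"
    unfolding comp_from_kth_iterate by (rule ex_pair_at_multiple_time[OF assms(1)])
qed

lemma na_sensitive_kth_iterate:
  fixes f :: "nat \<Rightarrow> 'a::metric_space \<Rightarrow> 'a"
  assumes "k \<ge> 1"
    and blocks: "uniformly_equicontinuous ({1..} \<times> {..k}) (\<lambda>(j, r). comp_from f j r)"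
    and "na_sensitive f"
  shows "na_sensitive (kth_iterate f k)"
  using assms(3)
proof (rule na_sensitiveE)
  fix \<delta> :: real
  assume "\<delta> > 0" and sens: "\<And>U. open U \<Longrightarrow> U \<noteq> {} \<Longrightarrow>
      \<exists>x\<in>U. \<exists>y\<in>U. \<exists>n\<ge>1. dist (comp_from f 1 n x) (comp_from f 1 n y) > \<delta>"
  obtain \<eta> where "\<eta> > 0" and \<eta>: "\<And>p x y. p \<in> {1..} \<times> {..k} \<Longrightarrow> dist x y < \<eta> \<Longrightarrow>
      dist ((\<lambda>(j, r). comp_from f j r) p x) ((\<lambda>(j, r). comp_from f j r) p y) < \<delta>"
    by (rule uniformly_equicontinuousD[OF blocks \<open>\<delta> > 0\<close>]) blast
  show ?thesis
  proof (rule na_sensitiveI)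
    show "\<eta> / 2 > 0"
      using \<open>\<eta> > 0\<close> by simp
  next
    fix U :: "'a set"
    assume "open U" "U \<noteq> {}"
    then obtain u where "u \<in> U"
      by auto
    let ?V = "U \<inter> ball u (\<eta> / 2)"
    have "open ?V" "?V \<noteq> {}"
      using \<open>open U\<close> \<open>u \<in> U\<close> \<open>\<eta> > 0\<close> by auto
    then obtain x y n where "x \<in> ?V" "y \<in> ?V" "n \<ge> 1"
      and far: "dist (comp_from f 1 n x) (comp_from f 1 n y) > \<delta>"
      using sens by meson
    have "dist x u < \<eta> / 2" "dist y u < \<eta> / 2"
      using \<open>x \<in> ?V\<close> \<open>y \<in> ?V\<close> by (auto simp: dist_commute)
    then have "dist x y < \<eta>"
      by (rule dist_triangle_half_l)
    define m where "m = n div k"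
    define r where "r = n mod k"
    have "r \<le> k"
      using \<open>k \<ge> 1\<close> unfolding r_def by (simp add: less_imp_le)
    have split: "comp_from f 1 n = comp_from f (1 + k * m) r \<circ> comp_from f 1 (k * m)"
      using comp_from_add[of f 1 "k * m" r] unfolding m_def r_def by simp
    have block_far: "dist (comp_from f 1 (k * m) x) (comp_from f 1 (k * m) y) \<ge> \<eta>"
    proof (rule ccontr)
      assume "\<not> ?thesis"
      then have "dist (comp_from f (1 + k * m) r (comp_from f 1 (k * m) x))
          (comp_from f (1 + k * m) r (comp_from f 1 (k * m) y)) < \<delta>"
        using \<eta>[of "(1 + k * m, r)"] \<open>r \<le> k\<close> by simp
      with far split show False
        by simp
    qed
    have "m \<ge> 1"
    proof (rule ccontr)
      assume "\<not> m \<ge> 1"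
      then have "m = 0"
        by simp
      with block_far \<open>dist x y < \<eta>\<close> show False
        by simp
    qed
    with block_far \<open>\<eta> > 0\<close> \<open>x \<in> ?V\<close> \<open>y \<in> ?V\<close>
    show "\<exists>x\<in>U. \<exists>y\<in>U. \<exists>n\<ge>1.
        dist (comp_from (kth_iterate f k) 1 n x) (comp_from (kth_iterate f k) 1 n y) > \<eta> / 2"
      unfolding comp_from_kth_iterate by (intro bexI[of _ x] bexI[of _ y] exI[of _ m]) auto
  qed
qed

lemma na_accessible_kth_iterate:
  fixes f :: "nat \<Rightarrow> 'a::metric_space \<Rightarrow> 'a"
  assumes "k \<ge> 1"
    and blocks: "uniformly_equicontinuous ({1..} \<times> {..k}) (\<lambda>(j, r). comp_from f j r)"
    and "na_accessible f"
  shows "na_accessible (kth_iterate f k)"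
proof (rule na_accessibleI)
  fix e :: real and U V :: "'a set"
  assume "e > 0" and UV: "open U" "U \<noteq> {}" "open V" "V \<noteq> {}"
  obtain \<eta> where "\<eta> > 0" and \<eta>: "\<And>p x y. p \<in> {1..} \<times> {..k} \<Longrightarrow> dist x y < \<eta> \<Longrightarrow>
      dist ((\<lambda>(j, r). comp_from f j r) p x) ((\<lambda>(j, r). comp_from f j r) p y) < e"
    by (rule uniformly_equicontinuousD[OF blocks \<open>e > 0\<close>]) blast
  obtain x y n where "x \<in> U" "y \<in> V" "n \<ge> 1"
    and close: "dist (comp_from f 1 n x) (comp_from f 1 n y) < \<eta>"
    using na_accessibleD[OF assms(3) \<open>\<eta> > 0\<close> UV] by auto
  define m where "m = n div k + 1"
  have "k * m = k * (n div k) + k"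
    unfolding m_def by simp
  moreover have "k * (n div k) + n mod k = n"
    by (rule mult_div_mod_eq)
  moreover have "n mod k < k"
    using \<open>k \<ge> 1\<close> by simp
  ultimately have "n \<le> k * m" "k * m \<le> n + k"
    by linarith+
  then obtain r where r: "k * m = n + r" "r \<le> k"
    using le_iff_add by auto
  have "comp_from f 1 (k * m) = comp_from f (1 + n) r \<circ> comp_from f 1 n"
    unfolding r(1) by (rule comp_from_add)
  then have "dist (comp_from f 1 (k * m) x) (comp_from f 1 (k * m) y) < e"
    using \<eta>[of "(1 + n, r)"] close \<open>r \<le> k\<close> by simp
  moreover have "m \<ge> 1"
    unfolding m_def by simp
  ultimately show "\<exists>x\<in>U. \<exists>y\<in>V. \<exists>n\<ge>1.
      dist (comp_from (kth_iterate f k) 1 n x) (comp_from (kth_iterate f k) 1 n y) < e"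
    unfolding comp_from_kth_iterate using \<open>x \<in> U\<close> \<open>y \<in> V\<close>
    by (intro bexI[of _ x] bexI[of _ y] exI[of _ m]) auto
qed

lemma kato_chaotic_kth_iterate_iff:
  assumes "k \<ge> 1"
    and "uniformly_equicontinuous ({1..} \<times> {..k}) (\<lambda>(j, r). comp_from f j r)"
  shows "kato_chaotic f \<longleftrightarrow> kato_chaotic (kth_iterate f k)"
  using na_sensitive_kth_iterate[OF assms] na_accessible_kth_iterate[OF assms]
    na_sensitive_of_kth_iterate[OF assms(1)] na_accessible_of_kth_iterate[OF assms(1)]
  unfolding kato_chaotic_def by blast

theorem mainTheorem3:
  fixes f :: "nat \<Rightarrow> 'a::metric_space \<Rightarrow> 'a" and k :: nat
  assumes "compact (UNIV :: 'a set)"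
    and "\<And>n. n \<ge> 1 \<Longrightarrow> continuous_on UNIV (f n)"
    and "finitely_generated f \<or> (\<exists>g. uniform_limit UNIV f g sequentially)"
    and "k \<ge> 1"
  shows "kato_chaotic f \<longleftrightarrow> kato_chaotic (kth_iterate f k)"
proof -
  have "uniformly_equicontinuous {1..} f"
    using assms(1-3) by (rule uniformly_equicontinuous_of_compact)
  then have "uniformly_equicontinuous ({1..} \<times> {..k}) (\<lambda>(j, r). comp_from f j r)"
    by (rule uniformly_equicontinuous_comp_from_blocks)
  with assms(4) show ?thesis
    by (rule kato_chaotic_kth_iterate_iff)
qed

end
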